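(* Let $\gamma>1$ and $\varphi_e(z)=-\frac{1}{\gamma-1}\log z$ for $z>0$. In the discrete setting described in the context, let $(\rho_K^n)$, $(e_K^n)$ ($K\in\mathcal M$, $0\le n\le N$) be positive, let $\rho_\sigma^{n+1}$, $e_\sigma^{n+1}$ be face values on interior faces, $u_{K,\sigma}^{n+1}$ normal face velocities, and $F_{K,\sigma}^{n+1}=|\sigma|\,\rho_\sigma^{n+1}u_{K,\sigma}^{n+1}$. For $\sigma=K|L\in\mathcal{E}_{\rm int}$ and $0\le n\le N-1$ let $e_{KL}^{n+1}$ be the number $x_{KL}$ associated with $\varphi=\varphi_e$, $x_K=e_K^{n+1}$, $x_L=e_L^{n+1}$, and define \[ (\delta\varphi_e)_\sigma^{n+1}=\varphi_e(e_K^{n+1})-\varphi_e(e_\sigma^{n+1})+\varphi_e'(e_K^{n+1})\bigl[e_{KL}^{n+1}-e_K^{n+1}\bigr]+\tfrac12\bigl[\varphi_e'(e_K^{n+1})+\varphi_e'(e_L^{n+1})\bigr]\bigl[e_\sigma^{n+1}-e_{KL}^{n+1}\bigr], \] \[ |K|\,(\delta R_e)_K^{n+1}=\sum_{\sigma\in\mathcal{E}(K)\cap\mathcal{E}_{\rm int}}(\delta\varphi_e)_\sigma^{n+1}F_{K,\sigma}^{n+1}. \] Assume that for every $\sigma=K|L\in\mathcal{E}_{\rm int}$ and $0\le n\le N-1$: $e_\sigma^{n+1}\in|\hspace{-0.12em}[e_K^{n+1},e_{KL}^{n+1}]\hspace{-0.12em}|$ if $u_{K,\sigma}^{n+1}\ge0$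 and $e_\sigma^{n+1}\in|\hspace{-0.12em}[e_L^{n+1},e_{KL}^{n+1}]\hspace{-0.12em}|$ otherwise. Let $M>1$ and suppose $\rho_K^n\le M$, $e_K^n\le M$, $1/e_K^n\le M$, $|u_{K,\sigma}^n|\le M$ for all $K\in\mathcal M$, $\sigma\in\mathcal{E}(K)$, $0\le n\le N$. Let $|\varphi_e'|_\infty=\max(|\varphi_e'(1/M)|,|\varphi_e'(M)|)$. Then \[ \|\delta R_e\|_{-1,1}\le 3\,M^2\,|\varphi_e'|_\infty\,\|e\|_{x,BV}\,h_{\mathcal M}. \]
   Context: Setting: $\Omega\subset\mathbb{R}^d$ bounded; $\mathcal{M}$ a regular polytopal mesh of $\Omega$ with faces $\mathcal{E}$, faces of $K$ denoted $\mathcal{E}(K)$, interior faces $\mathcal{E}_{\rm int}$; $\sigma=K|L$ denotes the interior face between $K$ and $L$; $|K|$, $|\sigma|$ are the measures; ${\boldsymbol x}_K$ is the mass center of $K$; $h_{\mathcal M}=\max_{K}{\rm diam}(K)$. Uniform time grid $t_n=n\,\delta t$, $0\le n\le N$, $t_N=T$. Normal velocities satisfy $u_{L,\sigma}^n=-u_{K,\sigma}^n$ for $\sigma=K|L$ and vanish on boundary faces; face values depend only on the face. Notation $|\hspace{-0.12em}[a,b]\hspace{-0.12em}|=[\min(a,b),\max(a,b)]$. The number $x_{KL}$: for a strictly convex continuously differentiable $\varphi$ on an interval $I$ and $x_K,x_L\in I$, $x_{KL}$ is the unique real number in $|\hspace{-0.12em}[x_K,x_L]\hspace{-0.12em}|$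 with $\varphi(x_K)+\varphi'(x_K)(x_{KL}-x_K)=\varphi(x_L)+\varphi'(x_L)(x_{KL}-x_L)$ if $x_K\ne x_L$, and $x_{KL}=x_K=x_L$ otherwise. Norms: $\|z\|_{x,BV}=\sum_{n}\delta t\sum_{\sigma=K|L\in\mathcal{E}_{\rm int}}|\sigma|\,|z_L^n-z_K^n|$, and \[ \|z\|_{-1,1}=\sup_{\psi}\frac{1}{\sup_{{\boldsymbol x}\in\Omega,t\in(0,T)}|\nabla\psi({\boldsymbol x},t)|}\Bigl[\sum_{n}\delta t\sum_{K\in\mathcal M}|K|\,z_K^n\,\psi({\boldsymbol x}_K,t_n)\Bigr], \] supremum over $\psi\in C^\infty_c([0,T)\times\bar\Omega)$ with nonzero gradient, sums over $n$ over the time indices where $z$ is defined. *)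

theory Defs
  imports "HOL-Analysis.Analysis"
begin

fun dderiv :: "'a::euclidean_space list \<Rightarrow> ('a \<Rightarrow> real) \<Rightarrow> 'a \<Rightarrow> real" where
  "dderiv [] f = f"
| "dderiv (v # vs) f = (\<lambda>x. frechet_derivative (dderiv vs f) (at x) v)"

definition smooth_fun :: "('a::euclidean_space \<Rightarrow> real) \<Rightarrow> bool" where
  "smooth_fun f \<longleftrightarrow> (\<forall>vs. dderiv vs f differentiable_on UNIV)"

definition cell_faces :: "'a::euclidean_space set \<Rightarrow> 'a set set" where
  "cell_faces K = {\<sigma>. \<sigma> facet_of K}"

definition int_face :: "'a::euclidean_space set set \<Rightarrow> 'a set \<Rightarrow> 'a set \<Rightarrow> 'a set \<Rightarrow> bool" where
  "int_face Mesh K L \<sigma> \<longleftrightarrow> K \<in> Mesh \<and> L \<in> Mesh \<and> K \<noteq> L \<and> \<sigma> = K \<inter> L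
       \<and> \<sigma> facet_of K \<and> \<sigma> facet_of L"

definition int_faces :: "'a::euclidean_space set set \<Rightarrow> 'a set set" where
  "int_faces Mesh = {\<sigma>. \<exists>K L. int_face Mesh K L \<sigma>}"

definition polytopal_mesh :: "'a::euclidean_space set \<Rightarrow> 'a set set \<Rightarrow> bool" where
  "polytopal_mesh \<Omega> Mesh \<longleftrightarrow>
     open \<Omega> \<and> bounded \<Omega> \<and> finite Mesh \<and>
     (\<forall>K\<in>Mesh. polytope K \<and> interior K \<noteq> {}) \<and>
     (\<forall>K\<in>Mesh. \<forall>L\<in>Mesh. K \<noteq> L \<longrightarrow> interior K \<inter> interior L = {}) \<and>
     \<Union>Mesh = closure \<Omega> \<and>
     (\<forall>\<sigma>\<in>int_faces Mesh. card {K\<in>Mesh. \<sigma> facet_of K} = 2) \<and>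
     (\<forall>K\<in>Mesh. \<forall>\<sigma>\<in>cell_faces K. \<sigma> \<in> int_faces Mesh \<or> \<sigma> \<subseteq> frontier \<Omega>)"

definition nbr :: "'a::euclidean_space set set \<Rightarrow> 'a set \<Rightarrow> 'a set \<Rightarrow> 'a set" where
  "nbr Mesh K \<sigma> = (THE L. L \<in> Mesh \<and> L \<noteq> K \<and> \<sigma> facet_of L)"

text \<open>Some cell having \<sigma> as a face (used to write sums over \<sigma> = K|L).\<close>
definition cell1 :: "'a::euclidean_space set set \<Rightarrow> 'a set \<Rightarrow> 'a set" where
  "cell1 Mesh \<sigma> = (SOME K. K \<in> Mesh \<and> \<sigma> facet_of K)"

definition vol :: "'a::euclidean_space set \<Rightarrow> real" where
  "vol K = measure lebesgue K"

definition center :: "'a::euclidean_space set \<Rightarrow> 'a" where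
  "center K = (1 / vol K) *\<^sub>R integral K (\<lambda>x. x)"

definition mesh_size :: "'a::euclidean_space set set \<Rightarrow> real" where
  "mesh_size Mesh = Max (diameter ` Mesh)"

definition xKL :: "(real \<Rightarrow> real) \<Rightarrow> real \<Rightarrow> real \<Rightarrow> real" where
  "xKL \<phi> xK xL =
     (if xK = xL then xK
      else THE x. min xK xL \<le> x \<and> x \<le> max xK xL \<and>
             \<phi> xK + deriv \<phi> xK * (x - xK) = \<phi> xL + deriv \<phi> xL * (x - xL))"

definition between :: "real \<Rightarrow> real \<Rightarrow> real set" where
  "between a b = {min a b .. max a b}"

definition phi_e :: "real \<Rightarrow> real \<Rightarrow> real" where
  "phi_e \<gamma> z = - (1 / (\<gamma> - 1)) * ln z"

text \<open>(\<delta>\<phi>_e)_\<sigma>^{n+1} for \<sigma> = K|L, written at time index m = n+1.\<close>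
definition dphi :: "real \<Rightarrow> ('a set \<Rightarrow> nat \<Rightarrow> real) \<Rightarrow> ('a set \<Rightarrow> nat \<Rightarrow> real)
                     \<Rightarrow> 'a set \<Rightarrow> 'a set \<Rightarrow> 'a set \<Rightarrow> nat \<Rightarrow> real" where
  "dphi \<gamma> e ef K L \<sigma> m =
     (let \<phi> = phi_e \<gamma>; eK = e K m; eL = e L m; es = ef \<sigma> m; ekl = xKL \<phi> eK eL in
       \<phi> eK - \<phi> es + deriv \<phi> eK * (ekl - eK)
       + (1/2) * (deriv \<phi> eK + deriv \<phi> eL) * (es - ekl))"

definition dR :: "'a::euclidean_space set set \<Rightarrow> ('a set \<Rightarrow> real) \<Rightarrow> real
      \<Rightarrow> ('a set \<Rightarrow> nat \<Rightarrow> real) \<Rightarrow> ('a set \<Rightarrow> nat \<Rightarrow> real) \<Rightarrow> ('a set \<Rightarrow> nat \<Rightarrow> real)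
      \<Rightarrow> ('a set \<Rightarrow> 'a set \<Rightarrow> nat \<Rightarrow> real) \<Rightarrow> 'a set \<Rightarrow> nat \<Rightarrow> real" where
  "dR Mesh area \<gamma> e ef rhof u K m =
     (\<Sum>\<sigma> \<in> cell_faces K \<inter> int_faces Mesh.
        dphi \<gamma> e ef K (nbr Mesh K \<sigma>) \<sigma> m * (area \<sigma> * rhof \<sigma> m * u K \<sigma> m)) / vol K"

definition norm_xBV :: "'a::euclidean_space set set \<Rightarrow> ('a set \<Rightarrow> real) \<Rightarrow> real \<Rightarrow> nat
                         \<Rightarrow> ('a set \<Rightarrow> nat \<Rightarrow> real) \<Rightarrow> real" where
  "norm_xBV Mesh area dt N z =
     (\<Sum>n \<in> {0..N}. dt * (\<Sum>\<sigma> \<in> int_faces Mesh.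
        area \<sigma> * \<bar>z (nbr Mesh (cell1 Mesh \<sigma>) \<sigma>) n - z (cell1 Mesh \<sigma>) n\<bar>))"

definition grad_norm :: "('a::euclidean_space \<Rightarrow> real \<Rightarrow> real) \<Rightarrow> 'a \<Rightarrow> real \<Rightarrow> real" where
  "grad_norm \<psi> x t = onorm (frechet_derivative (\<lambda>y. \<psi> y t) (at x))"

definition grad_sup :: "'a::euclidean_space set \<Rightarrow> real \<Rightarrow> ('a \<Rightarrow> real \<Rightarrow> real) \<Rightarrow> real" where
  "grad_sup \<Omega> T \<psi> = Sup {grad_norm \<psi> x t | x t. x \<in> \<Omega> \<and> t \<in> {0<..<T}}"

text \<open>Test functions: \<psi> \<in> C_c^\<infinity>([0,T) \<times> closure \<Omega>) with nonzero gradient.\<close>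
definition test_fn :: "'a::euclidean_space set \<Rightarrow> real \<Rightarrow> ('a \<Rightarrow> real \<Rightarrow> real) \<Rightarrow> bool" where
  "test_fn \<Omega> T \<psi> \<longleftrightarrow> smooth_fun (\<lambda>(x, t). \<psi> x t) \<and>
     (\<exists>t0 < T. \<forall>x \<in> closure \<Omega>. \<forall>t \<in> {t0..T}. \<psi> x t = 0) \<and>
     (\<exists>x \<in> \<Omega>. \<exists>t \<in> {0<..<T}. grad_norm \<psi> x t \<noteq> 0)"

definition norm_m11 :: "'a::euclidean_space set \<Rightarrow> 'a set set \<Rightarrow> real \<Rightarrow> nat \<Rightarrow> nat set
                        \<Rightarrow> ('a set \<Rightarrow> nat \<Rightarrow> real) \<Rightarrow> ereal" where
  "norm_m11 \<Omega> Mesh dt N I z =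
     (SUP \<psi> \<in> {\<psi>. test_fn \<Omega> (real N * dt) \<psi>}.
        ereal ((\<Sum>n \<in> I. dt * (\<Sum>K \<in> Mesh. vol K * z K n * \<psi> (center K) (real n * dt)))
               / grad_sup \<Omega> (real N * dt) \<psi>))"

end

theory Submission
  imports Defs
begin

text \<open>
  The face term (\<delta>\<phi>_e)_\<sigma> is symmetric in K and L, because e_KL is where the tangents to
  \<phi>_e at e_K and e_L meet, whereas the normal velocity is antisymmetric. Hence the flux is
  conservative, and summation by parts turns the pairing of \<delta>R_e with a test function \<psi> into a
  sum over interior faces of the flux times \<psi>(x_K) - \<psi>(x_L), which is at most
  2 h sup |\<nabla>\<psi>|. Since the upwind value e_\<sigma> lies between e_K and e_KL, a first-order
  expansion of the logarithm gives |(\<delta>\<phi>_e)_\<sigma>| \<le> M / (\<gamma> - 1) |e_K - e_L|, and the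
  flux contributes the remaining factor M^2 |\<sigma>|.
\<close>

section \<open>The entropy function and its tangents\<close>

lemma deriv_phi_e:
  assumes "z > 0"
  shows "deriv (phi_e g) z = - (1 / (g - 1)) * (1 / z)"
proof -
  have "((\<lambda>z. - (1 / (g - 1)) * ln z) has_real_derivative - (1 / (g - 1)) * (1 / z)) (at z)"
    using assms DERIV_ln[of z] by (intro DERIV_cmult) (simp add: divide_inverse)
  then show ?thesis
    unfolding phi_e_def[abs_def] by (rule DERIV_imp_deriv)
qed

lemma phi_e_tangents_meet_iff:
  assumes "a > 0" "b > 0" "a \<noteq> b" "g > 1"
  shows "phi_e g a + deriv (phi_e g) a * (x - a) = phi_e g b + deriv (phi_e g) b * (x - b)
     \<longleftrightarrow> x = a * b * (ln a - ln b) / (a - b)"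
proof -
  have "phi_e g a + deriv (phi_e g) a * (x - a) = phi_e g b + deriv (phi_e g) b * (x - b)
      \<longleftrightarrow> - (1 / (g - 1)) * (ln a + (x - a) / a) = - (1 / (g - 1)) * (ln b + (x - b) / b)"
    using assms by (simp add: deriv_phi_e phi_e_def algebra_simps)
  also have "\<dots> \<longleftrightarrow> ln a + (x - a) / a = ln b + (x - b) / b"
    using assms by simp
  also have "\<dots> \<longleftrightarrow> x * (a - b) = a * b * (ln a - ln b)"
    using assms by (simp add: field_simps) argo
  also have "\<dots> \<longleftrightarrow> x = a * b * (ln a - ln b) / (a - b)"
    using assms by (simp add: field_simps)
  finally show ?thesis .
qed

lemma ln_tangent_crossing_between:
  fixes a b :: real
  assumes "a > 0" "b > 0" "a \<noteq> b"
  shows "a * b * (ln a - ln b) / (a - b) \<in> between a b"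
proof -
  have mono: "y \<le> x * y * (ln x - ln y) / (x - y) \<and> x * y * (ln x - ln y) / (x - y) \<le> x"
    if "0 < y" "y < x" for x y :: real
  proof -
    have pos: "x * y > 0" "x - y > 0"
      using that by auto
    have "y = x * y * ((x - y) / x) / (x - y)"
      using that by (simp add: field_simps)
    also have "\<dots> \<le> x * y * (ln x - ln y) / (x - y)"
      using ln_diff_le[of y x] that pos by (intro divide_right_mono mult_left_mono) (simp_all add: field_simps)
    finally have lower: "y \<le> x * y * (ln x - ln y) / (x - y)" .
    have "x * y * (ln x - ln y) / (x - y) \<le> x * y * ((x - y) / y) / (x - y)"
      using ln_diff_le[of x y] that pos by (intro divide_right_mono mult_left_mono) simp_all
    also have "\<dots> = x"
      using that by (simp add: field_simps)
    finally show ?thesis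
      using lower by simp
  qed
  have "a * b * (ln a - ln b) / (a - b) = b * a * (ln b - ln a) / (b - a)"
    using assms(3) by (simp add: field_simps)
  then show ?thesis
    using mono[of b a] mono[of a b] assms by (cases "b < a") (auto simp: between_def)
qed

lemma xKL_phi_e:
  assumes "a > 0" "b > 0" "a \<noteq> b" "g > 1"
  shows "xKL (phi_e g) a b = a * b * (ln a - ln b) / (a - b)"
proof -
  have "(THE x. min a b \<le> x \<and> x \<le> max a b \<and>
      phi_e g a + deriv (phi_e g) a * (x - a) = phi_e g b + deriv (phi_e g) b * (x - b))
      = a * b * (ln a - ln b) / (a - b)"
    using phi_e_tangents_meet_iff[OF assms] ln_tangent_crossing_between[OF assms(1-3)]
    by (intro the_equality) (auto simp: between_def)
  then show ?thesis
    using assms by (simp add: xKL_def)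
qed

lemma xKL_phi_e_between:
  assumes "a > 0" "b > 0" "g > 1"
  shows "xKL (phi_e g) a b \<in> between a b"
  using assms ln_tangent_crossing_between[of a b] xKL_phi_e[of a b g]
  by (cases "a = b") (simp_all add: xKL_def between_def)

lemma phi_e_tangents_meet_at_xKL:
  assumes "a > 0" "b > 0" "g > 1"
  shows "phi_e g a + deriv (phi_e g) a * (xKL (phi_e g) a b - a)
       = phi_e g b + deriv (phi_e g) b * (xKL (phi_e g) a b - b)"
  using assms phi_e_tangents_meet_iff[of a b g] by (cases "a = b") (simp_all add: xKL_phi_e)

lemma xKL_phi_e_commute:
  assumes "a > 0" "b > 0" "g > 1"
  shows "xKL (phi_e g) a b = xKL (phi_e g) b a"
  using assms by (cases "a = b") (simp_all add: xKL_phi_e field_simps)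

lemma max_abs_deriv_phi_e:
  assumes "g > 1" "M > 1"
  shows "max \<bar>deriv (phi_e g) (1 / M)\<bar> \<bar>deriv (phi_e g) M\<bar> = M / (g - 1)"
proof -
  have "1 / M \<le> M"
    using assms by (simp add: divide_le_eq) (smt (verit) mult_le_cancel_left1)
  then have "1 / M / (g - 1) \<le> M / (g - 1)"
    using assms by (intro divide_right_mono) auto
  moreover have "\<bar>deriv (phi_e g) (1 / M)\<bar> = M / (g - 1)" "\<bar>deriv (phi_e g) M\<bar> = 1 / M / (g - 1)"
    using assms by (simp_all add: deriv_phi_e abs_mult)
  ultimately show ?thesis
    by simp
qed

definition entropy_remainder :: "real \<Rightarrow> real \<Rightarrow> real \<Rightarrow> real \<Rightarrow> real" where
  "entropy_remainder g a b s = phi_e g a - phi_e g s + deriv (phi_e g) a * (xKL (phi_e g) a b - a)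
     + 1/2 * (deriv (phi_e g) a + deriv (phi_e g) b) * (s - xKL (phi_e g) a b)"

lemma dphi_eq_entropy_remainder: "dphi g e ef K L \<sigma> m = entropy_remainder g (e K m) (e L m) (ef \<sigma> m)"
  by (simp add: dphi_def entropy_remainder_def Let_def)

lemma entropy_remainder_commute:
  assumes "a > 0" "b > 0" "g > 1"
  shows "entropy_remainder g a b s = entropy_remainder g b a s"
  using phi_e_tangents_meet_at_xKL[OF assms] xKL_phi_e_commute[OF assms]
  unfolding entropy_remainder_def by (simp add: algebra_simps)

lemma entropy_remainder_eq:
  assumes "a > 0" "b > 0" "s > 0"
  shows "entropy_remainder g a b s = 1 / (g - 1) *
     (ln s - ln a - (s - a) / a + 1/2 * (1 / a - 1 / b) * (s - xKL (phi_e g) a b))"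
proof -
  have "- c * ln a - - c * ln s + - c * (1 / a) * (x - a) + 1/2 * (- c * (1 / a) + - c * (1 / b)) * (s - x)
      = c * (ln s - ln a - (s - a) / a + 1/2 * (1 / a - 1 / b) * (s - x))" for c x
    using assms by (simp add: field_simps)
  then show ?thesis
    unfolding entropy_remainder_def phi_e_def deriv_phi_e[OF assms(1)] deriv_phi_e[OF assms(2)] .
qed

lemma ln_linearization_error:
  fixes a s :: real
  assumes "a > 0" "s > 0"
  shows "\<bar>ln s - ln a - (s - a) / a\<bar> \<le> \<bar>s - a\<bar> * \<bar>1 / s - 1 / a\<bar>"
proof -
  have "(s - a) / s \<le> ln s - ln a" "ln s - ln a \<le> (s - a) / a"
    using ln_diff_le[of a s] ln_diff_le[of s a] assms by (simp_all add: field_simps)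
  moreover have "(s - a) / s - (s - a) / a = (s - a) * (1 / s - 1 / a)"
    by (simp add: algebra_simps)
  ultimately show ?thesis
    by (simp add: abs_mult[symmetric])
qed

lemma abs_inverse_diff_le:
  fixes a b M :: real
  assumes "a > 0" "b > 0" "1 / a \<le> M" "1 / b \<le> M"
  shows "\<bar>1 / a - 1 / b\<bar> \<le> M"
  using assms by (simp add: abs_le_iff) (smt (verit) divide_pos_pos zero_less_one)

lemma entropy_remainder_bound:
  assumes g: "g > 1" and a: "a > 0" "1 / a \<le> M" and b: "b > 0" "1 / b \<le> M"
    and s: "s \<in> between a (xKL (phi_e g) a b)"
  shows "\<bar>entropy_remainder g a b s\<bar> \<le> M / (g - 1) * \<bar>a - b\<bar>"
proof -
  define x where "x = xKL (phi_e g) a b"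
  have x: "x \<in> between a b" and s: "s \<in> between a x"
    using xKL_phi_e_between[OF a(1) b(1) g] s by (simp_all add: x_def)
  then have s_min: "min a b \<le> s" and dist: "\<bar>s - a\<bar> + \<bar>s - x\<bar> \<le> \<bar>a - b\<bar>"
    by (auto simp: between_def min_def max_def abs_if split: if_splits)
  then have s_pos: "s > 0"
    using a b by linarith
  have s_inv: "1 / s \<le> M"
    using s_min a b s_pos by (cases "a \<le> b") (auto simp: min_def intro: order_trans[OF divide_left_mono])
  have M: "M \<ge> 0"
    using a by (smt (verit) divide_pos_pos)
  have "\<bar>entropy_remainder g a b s\<bar>
      = 1 / (g - 1) * \<bar>ln s - ln a - (s - a) / a + 1/2 * (1 / a - 1 / b) * (s - x)\<bar>"
    using g unfolding entropy_remainder_eq[OF a(1) b(1) s_pos] x_def[symmetric] by (simp add: abs_mult)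
  also have "\<dots> \<le> 1 / (g - 1) * (\<bar>s - a\<bar> * M + 1/2 * (M * \<bar>s - x\<bar>))"
  proof (intro mult_left_mono order_trans[OF abs_triangle_ineq] add_mono)
    show "\<bar>ln s - ln a - (s - a) / a\<bar> \<le> \<bar>s - a\<bar> * M"
      using ln_linearization_error[OF a(1) s_pos] abs_inverse_diff_le[OF s_pos a(1) s_inv a(2)]
      by (meson abs_ge_zero mult_left_mono order_trans)
    show "\<bar>1/2 * (1 / a - 1 / b) * (s - x)\<bar> \<le> 1/2 * (M * \<bar>s - x\<bar>)"
      using abs_inverse_diff_le[OF a(1) b(1) a(2) b(2)] by (simp add: abs_mult mult_right_mono)
  qed (use g in auto)
  also have "\<dots> \<le> 1 / (g - 1) * (M * \<bar>a - b\<bar>)"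
  proof (rule mult_left_mono)
    have "\<bar>s - a\<bar> * M + 1/2 * (M * \<bar>s - x\<bar>) \<le> M * (\<bar>s - a\<bar> + \<bar>s - x\<bar>)"
      using M by (simp add: algebra_simps)
    also have "\<dots> \<le> M * \<bar>a - b\<bar>"
      using dist M by (rule mult_left_mono)
    finally show "\<bar>s - a\<bar> * M + 1/2 * (M * \<bar>s - x\<bar>) \<le> M * \<bar>a - b\<bar>" .
  qed (use g in simp)
  finally show ?thesis
    by simp
qed

lemma entropy_remainder_upwind_bound:
  assumes g: "g > 1" and a: "a > 0" "1 / a \<le> M" and b: "b > 0" "1 / b \<le> M"
    and upwind: "u > 0 \<Longrightarrow> s \<in> between a (xKL (phi_e g) a b)"
      "u < 0 \<Longrightarrow> s \<in> between b (xKL (phi_e g) b a)"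
  shows "\<bar>entropy_remainder g a b s * u\<bar> \<le> M / (g - 1) * \<bar>b - a\<bar> * \<bar>u\<bar>"
proof (cases u "0::real" rule: linorder_cases)
  case less
  then have "\<bar>entropy_remainder g a b s\<bar> \<le> M / (g - 1) * \<bar>b - a\<bar>"
    using entropy_remainder_bound[OF g b a upwind(2)] entropy_remainder_commute[OF a(1) b(1) g]
    by simp
  then show ?thesis
    unfolding abs_mult by (rule mult_right_mono) simp
next
  case greater
  then show ?thesis
    using entropy_remainder_bound[OF g a b upwind(1)]
    unfolding abs_mult abs_minus_commute[of b] by (intro mult_right_mono) simp_all
qed simp

section \<open>Interior faces and summation by parts\<close>

lemma int_face_commute: "int_face Mesh K L \<sigma> \<Longrightarrow> int_face Mesh L K \<sigma>"
  unfolding int_face_def by auto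

lemma cells_of_int_face:
  assumes mesh: "polytopal_mesh \<Omega> Mesh" and KL: "int_face Mesh K L \<sigma>"
  shows "{X \<in> Mesh. \<sigma> facet_of X} = {K, L}"
proof -
  have card: "card {X \<in> Mesh. \<sigma> facet_of X} = 2"
    using mesh KL unfolding polytopal_mesh_def int_faces_def by blast
  then have "finite {X \<in> Mesh. \<sigma> facet_of X}"
    by (intro card_ge_0_finite) simp
  moreover have "{K, L} \<subseteq> {X \<in> Mesh. \<sigma> facet_of X}" "card {K, L} = 2"
    using KL unfolding int_face_def by auto
  ultimately show ?thesis
    using card by (metis card_subset_eq)
qed

lemma nbr_int_face:
  assumes mesh: "polytopal_mesh \<Omega> Mesh" and KL: "int_face Mesh K L \<sigma>"
  shows "nbr Mesh K \<sigma> = L"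
  unfolding nbr_def
proof (rule the_equality)
  show "L \<in> Mesh \<and> L \<noteq> K \<and> \<sigma> facet_of L"
    using KL unfolding int_face_def by auto
  show "X = L" if "X \<in> Mesh \<and> X \<noteq> K \<and> \<sigma> facet_of X" for X
    using that cells_of_int_face[OF mesh KL] by blast
qed

lemma int_face_nbr:
  assumes mesh: "polytopal_mesh \<Omega> Mesh" and K: "K \<in> Mesh" "\<sigma> facet_of K"
    and \<sigma>: "\<sigma> \<in> int_faces Mesh"
  shows "int_face Mesh K (nbr Mesh K \<sigma>) \<sigma>"
proof -
  obtain K' L' where KL': "int_face Mesh K' L' \<sigma>"
    using \<sigma> unfolding int_faces_def by blast
  then have "K = K' \<or> K = L'"
    using K cells_of_int_face[OF mesh KL'] by blast
  then obtain L where "int_face Mesh K L \<sigma>"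
    using KL' int_face_commute by blast
  then show ?thesis
    using nbr_int_face[OF mesh] by simp
qed

lemma int_face_cell1:
  assumes mesh: "polytopal_mesh \<Omega> Mesh" and \<sigma>: "\<sigma> \<in> int_faces Mesh"
  shows "int_face Mesh (cell1 Mesh \<sigma>) (nbr Mesh (cell1 Mesh \<sigma>) \<sigma>) \<sigma>"
proof -
  have "\<exists>K. K \<in> Mesh \<and> \<sigma> facet_of K"
    using \<sigma> unfolding int_faces_def int_face_def by blast
  then have "cell1 Mesh \<sigma> \<in> Mesh \<and> \<sigma> facet_of cell1 Mesh \<sigma>"
    unfolding cell1_def by (rule someI_ex)
  then show ?thesis
    using int_face_nbr[OF mesh _ _ \<sigma>] by blast
qed

lemma finite_int_faces:
  assumes "polytopal_mesh \<Omega> Mesh"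
  shows "finite (int_faces Mesh)"
proof (rule finite_subset)
  show "int_faces Mesh \<subseteq> (\<Union>K\<in>Mesh. {\<sigma>. \<sigma> facet_of K})"
    unfolding int_faces_def int_face_def by auto
  show "finite (\<Union>K\<in>Mesh. {\<sigma>. \<sigma> facet_of K})"
    using assms unfolding polytopal_mesh_def by (auto intro: finite_polytope_facets)
qed

lemma sum_cells_faces_eq_sum_int_faces:
  assumes mesh: "polytopal_mesh \<Omega> Mesh"
  shows "(\<Sum>K\<in>Mesh. \<Sum>\<sigma>\<in>cell_faces K \<inter> int_faces Mesh. f K \<sigma>)
       = (\<Sum>\<sigma>\<in>int_faces Mesh. f (cell1 Mesh \<sigma>) \<sigma> + f (nbr Mesh (cell1 Mesh \<sigma>) \<sigma>) \<sigma>)"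
proof -
  have "(\<Sum>K\<in>Mesh. \<Sum>\<sigma>\<in>cell_faces K \<inter> int_faces Mesh. f K \<sigma>)
      = (\<Sum>K\<in>Mesh. \<Sum>\<sigma>\<in>{\<sigma> \<in> int_faces Mesh. \<sigma> facet_of K}. f K \<sigma>)"
    unfolding cell_faces_def by (intro sum.cong) auto
  also have "\<dots> = (\<Sum>\<sigma>\<in>int_faces Mesh. \<Sum>K\<in>{K \<in> Mesh. \<sigma> facet_of K}. f K \<sigma>)"
    using mesh finite_int_faces[OF mesh] unfolding polytopal_mesh_def by (intro sum.swap_restrict) auto
  also have "\<dots> = (\<Sum>\<sigma>\<in>int_faces Mesh. f (cell1 Mesh \<sigma>) \<sigma> + f (nbr Mesh (cell1 Mesh \<sigma>) \<sigma>) \<sigma>)"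
  proof (rule sum.cong[OF refl])
    fix \<sigma> assume "\<sigma> \<in> int_faces Mesh"
    note KL = int_face_cell1[OF mesh this]
    then show "(\<Sum>K\<in>{K \<in> Mesh. \<sigma> facet_of K}. f K \<sigma>) = f (cell1 Mesh \<sigma>) \<sigma> + f (nbr Mesh (cell1 Mesh \<sigma>) \<sigma>) \<sigma>"
      unfolding cells_of_int_face[OF mesh KL] by (simp add: int_face_def)
  qed
  finally show ?thesis .
qed

lemma sum_conservative_flux:
  fixes F :: "'a::euclidean_space set \<Rightarrow> 'a set \<Rightarrow> 'b::comm_ring"
  assumes mesh: "polytopal_mesh \<Omega> Mesh"
    and conservative: "\<And>K L \<sigma>. int_face Mesh K L \<sigma> \<Longrightarrow> F L \<sigma> = - F K \<sigma>"
  shows "(\<Sum>K\<in>Mesh. \<Sum>\<sigma>\<in>cell_faces K \<inter> int_faces Mesh. F K \<sigma> * f K)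
       = (\<Sum>\<sigma>\<in>int_faces Mesh. F (cell1 Mesh \<sigma>) \<sigma> * (f (cell1 Mesh \<sigma>) - f (nbr Mesh (cell1 Mesh \<sigma>) \<sigma>)))"
  unfolding sum_cells_faces_eq_sum_int_faces[OF mesh]
proof (rule sum.cong[OF refl])
  fix \<sigma> assume "\<sigma> \<in> int_faces Mesh"
  then show "F (cell1 Mesh \<sigma>) \<sigma> * f (cell1 Mesh \<sigma>) + F (nbr Mesh (cell1 Mesh \<sigma>) \<sigma>) \<sigma> * f (nbr Mesh (cell1 Mesh \<sigma>) \<sigma>)
      = F (cell1 Mesh \<sigma>) \<sigma> * (f (cell1 Mesh \<sigma>) - f (nbr Mesh (cell1 Mesh \<sigma>) \<sigma>))"
    using conservative[OF int_face_cell1[OF mesh]] by (simp add: right_diff_distrib)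
qed

lemma sum_conservative_flux_le:
  fixes F :: "'a::euclidean_space set \<Rightarrow> 'a set \<Rightarrow> real"
  assumes mesh: "polytopal_mesh \<Omega> Mesh"
    and conservative: "\<And>K L \<sigma>. int_face Mesh K L \<sigma> \<Longrightarrow> F L \<sigma> = - F K \<sigma>"
    and flux_bound: "\<And>K L \<sigma>. int_face Mesh K L \<sigma> \<Longrightarrow> \<bar>F K \<sigma>\<bar> \<le> B \<sigma> * \<bar>z L - z K\<bar>"
    and jump_bound: "\<And>K L \<sigma>. int_face Mesh K L \<sigma> \<Longrightarrow> \<bar>f K - f L\<bar> \<le> D"
  shows "(\<Sum>K\<in>Mesh. \<Sum>\<sigma>\<in>cell_faces K \<inter> int_faces Mesh. F K \<sigma> * f K)
       \<le> D * (\<Sum>\<sigma>\<in>int_faces Mesh. B \<sigma> * \<bar>z (nbr Mesh (cell1 Mesh \<sigma>) \<sigma>) - z (cell1 Mesh \<sigma>)\<bar>)"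
proof -
  let ?K = "cell1 Mesh" and ?L = "\<lambda>\<sigma>. nbr Mesh (cell1 Mesh \<sigma>) \<sigma>"
  have "(\<Sum>K\<in>Mesh. \<Sum>\<sigma>\<in>cell_faces K \<inter> int_faces Mesh. F K \<sigma> * f K)
      = (\<Sum>\<sigma>\<in>int_faces Mesh. F (?K \<sigma>) \<sigma> * (f (?K \<sigma>) - f (?L \<sigma>)))"
    by (rule sum_conservative_flux[OF mesh conservative])
  also have "\<dots> \<le> (\<Sum>\<sigma>\<in>int_faces Mesh. D * (B \<sigma> * \<bar>z (?L \<sigma>) - z (?K \<sigma>)\<bar>))"
  proof (rule sum_mono)
    fix \<sigma> assume "\<sigma> \<in> int_faces Mesh"
    note KL = int_face_cell1[OF mesh this]
    have "F (?K \<sigma>) \<sigma> * (f (?K \<sigma>) - f (?L \<sigma>)) \<le> \<bar>F (?K \<sigma>) \<sigma>\<bar> * \<bar>f (?K \<sigma>) - f (?L \<sigma>)\<bar>"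
      by (simp add: abs_mult[symmetric])
    also have "\<dots> \<le> B \<sigma> * \<bar>z (?L \<sigma>) - z (?K \<sigma>)\<bar> * D"
      using flux_bound[OF KL] jump_bound[OF KL] by (intro mult_mono) auto
    finally show "F (?K \<sigma>) \<sigma> * (f (?K \<sigma>) - f (?L \<sigma>)) \<le> D * (B \<sigma> * \<bar>z (?L \<sigma>) - z (?K \<sigma>)\<bar>)"
      by (simp add: mult.commute)
  qed
  finally show ?thesis
    by (simp add: sum_distrib_left)
qed

lemma vol_pos:
  fixes K :: "'a::euclidean_space set"
  assumes "compact K" "convex K" "interior K \<noteq> {}"
  shows "vol K > 0"
proof -
  have "\<not> negligible K"
    using negligible_convex_interior[OF assms(2)] assms(3) by simp
  then have "measure lebesgue K \<noteq> 0"
    using negligible_iff_measure0[OF lmeasurable_compact[OF assms(1)]] by simp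
  then show ?thesis
    unfolding vol_def using measure_nonneg[of lebesgue K] by linarith
qed

text \<open>Were the mass center outside K, a hyperplane strictly separating it from K would put the
  mean of a linear function below all of its values on K.\<close>
lemma center_mem:
  fixes K :: "'a::euclidean_space set"
  assumes cpt: "compact K" and cvx: "convex K" and "interior K \<noteq> {}"
  shows "center K \<in> K"
proof (rule ccontr)
  assume "center K \<notin> K"
  then obtain a b where sep: "a \<bullet> center K < b" "\<And>x. x \<in> K \<Longrightarrow> b < a \<bullet> x"
    using separating_hyperplane_closed_point[OF cvx compact_imp_closed[OF cpt]] by blast
  have lm: "K \<in> lmeasurable"
    using cpt by (rule lmeasurable_compact)
  obtain r where r: "K \<subseteq> cbox (-r) r"
    using bounded_subset_cbox_symmetric[OF compact_imp_bounded[OF cpt]] by blast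
  have "(\<lambda>x. x) absolutely_integrable_on cbox (-r) r"
    by (intro absolutely_integrable_continuous continuous_intros)
  then have id_int: "(\<lambda>x. x) integrable_on K"
    using set_integrable_subset[OF _ fmeasurableD[OF lm] r] set_lebesgue_integral_eq_integral(1) by blast
  have "b * vol K = integral K (\<lambda>x. b)"
    using lmeasure_integral[OF lm] integral_mult_left[of K "\<lambda>x. 1::real" b] by (simp add: vol_def mult.commute)
  also have "\<dots> \<le> integral K (\<lambda>x. a \<bullet> x)"
    using sep(2) integrable_on_const[OF lm] integrable_linear[OF id_int bounded_linear_inner_right[of a]]
    by (intro integral_le) (auto simp: o_def less_imp_le)
  also have "\<dots> = a \<bullet> integral K (\<lambda>x. x)"
    using integral_linear[OF id_int bounded_linear_inner_right[of a]] by (simp add: o_def)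
  also have "\<dots> = vol K * (a \<bullet> center K)"
    using vol_pos[OF assms] by (simp add: center_def)
  finally have "b \<le> a \<bullet> center K"
    using vol_pos[OF assms] by (simp add: mult.commute)
  then show False
    using sep(1) by simp
qed

lemma mesh_cell_facts:
  assumes "polytopal_mesh \<Omega> Mesh" "K \<in> Mesh"
  shows "compact K" "convex K" "interior K \<noteq> {}" "K \<subseteq> closure \<Omega>"
  using assms unfolding polytopal_mesh_def
  by (auto intro: polytope_imp_compact polytope_imp_convex)

lemma dist_center_le_mesh_size:
  assumes mesh: "polytopal_mesh \<Omega> Mesh" and K: "K \<in> Mesh" "p \<in> K"
  shows "dist (center K) p \<le> mesh_size Mesh"
proof -
  have "dist (center K) p \<le> diameter K"
    using mesh_cell_facts[OF mesh K(1)] K(2)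
    by (intro diameter_bounded_bound) (auto intro: compact_imp_bounded center_mem)
  also have "\<dots> \<le> mesh_size Mesh"
    using mesh K(1) unfolding mesh_size_def polytopal_mesh_def by (intro Max_ge) auto
  finally show ?thesis .
qed

lemma mesh_size_nonneg:
  assumes "polytopal_mesh \<Omega> Mesh" "K \<in> Mesh"
  shows "0 \<le> mesh_size Mesh"
  using dist_center_le_mesh_size[OF assms center_mem[OF mesh_cell_facts(1-3)[OF assms]]]
  by simp

section \<open>Test functions\<close>

lemma smooth_fun_has_derivative:
  assumes "smooth_fun F"
  shows "(F has_derivative frechet_derivative F (at p)) (at p)"
proof -
  have "dderiv [] F differentiable_on UNIV"
    using assms unfolding smooth_fun_def by blast
  then show ?thesis
    by (simp add: differentiable_on_def frechet_derivative_works[symmetric])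
qed

lemma continuous_on_smooth_fun_derivative:
  assumes "smooth_fun F"
  shows "continuous_on UNIV (\<lambda>p. frechet_derivative F (at p) v)"
proof -
  have "dderiv [v] F differentiable_on UNIV"
    using assms unfolding smooth_fun_def by blast
  then show ?thesis
    by (simp add: differentiable_imp_continuous_on)
qed

lemma smooth_fun_has_derivative_slice:
  assumes "smooth_fun (\<lambda>(x, t). \<psi> x t)"
  shows "((\<lambda>y. \<psi> y t) has_derivative (\<lambda>w. frechet_derivative (\<lambda>(x, t). \<psi> x t) (at (y, t)) (w, 0))) (at y)"
proof -
  have "((\<lambda>y. (y, t)) has_derivative (\<lambda>w. (w, 0))) (at y)"
    by (auto intro!: derivative_eq_intros)
  from diff_chain_at[OF this smooth_fun_has_derivative[OF assms]] show ?thesis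
    by (simp add: o_def)
qed

lemma grad_norm_eq_onorm:
  assumes "smooth_fun (\<lambda>(x, t). \<psi> x t)"
  shows "grad_norm \<psi> y t = onorm (\<lambda>w. frechet_derivative (\<lambda>(x, t). \<psi> x t) (at (y, t)) (w, 0))"
  unfolding grad_norm_def using frechet_derivative_at[OF smooth_fun_has_derivative_slice[OF assms]]
  by simp

lemma bdd_above_grad_norm:
  fixes \<Omega> :: "'a::euclidean_space set"
  assumes smooth: "smooth_fun (\<lambda>(x, t). \<psi> x t)" and "bounded \<Omega>"
  shows "bdd_above {grad_norm \<psi> x t | x t. x \<in> \<Omega> \<and> t \<in> {0<..<T}}"
proof -
  define D where "D p = frechet_derivative (\<lambda>(x, t). \<psi> x t) (at p)" for p
  define h where "h p = (\<Sum>i\<in>Basis. \<bar>D p (i, 0)\<bar>)" for p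
  have "compact (closure \<Omega> \<times> {0..T})"
    using assms(2) by (intro compact_Times) (auto simp: compact_closure)
  moreover have "continuous_on UNIV h"
    unfolding h_def D_def using continuous_on_smooth_fun_derivative[OF smooth]
    by (intro continuous_intros) auto
  ultimately have "bounded (h ` (closure \<Omega> \<times> {0..T}))"
    by (auto intro: compact_imp_bounded compact_continuous_image continuous_on_subset)
  then obtain B where "\<forall>y \<in> h ` (closure \<Omega> \<times> {0..T}). \<bar>y\<bar> \<le> B"
    unfolding bounded_iff by auto
  then have B: "h p \<le> B" if "p \<in> closure \<Omega> \<times> {0..T}" for p
    using that abs_ge_self[of "h p"] by (meson image_eqI order_trans)
  show ?thesis
  proof (rule bdd_aboveI, clarify)
    fix x t assume "x \<in> \<Omega>" "t \<in> {0<..<T}"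
    then have "(x, t) \<in> closure \<Omega> \<times> {0..T}"
      using closure_subset by fastforce
    moreover have "grad_norm \<psi> x t \<le> h (x, t)"
      unfolding grad_norm_eq_onorm[OF smooth] h_def D_def
      using onorm_componentwise[OF has_derivative_bounded_linear[OF smooth_fun_has_derivative_slice[OF smooth]]]
      by simp
    ultimately show "grad_norm \<psi> x t \<le> B"
      using B by fastforce
  qed
qed

lemma grad_norm_le_grad_sup:
  assumes "smooth_fun (\<lambda>(x, t). \<psi> x t)" "bounded \<Omega>" "x \<in> \<Omega>" "t \<in> {0<..<T}"
  shows "grad_norm \<psi> x t \<le> grad_sup \<Omega> T \<psi>"
  unfolding grad_sup_def using assms bdd_above_grad_norm[OF assms(1,2)] by (intro cSup_upper) auto

lemma grad_sup_pos:
  assumes "test_fn \<Omega> T \<psi>" "bounded \<Omega>"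
  shows "grad_sup \<Omega> T \<psi> > 0"
proof -
  obtain x t where x: "x \<in> \<Omega>" "t \<in> {0<..<T}" "grad_norm \<psi> x t \<noteq> 0"
    using assms(1) unfolding test_fn_def by blast
  have smooth: "smooth_fun (\<lambda>(x, t). \<psi> x t)"
    using assms(1) unfolding test_fn_def by blast
  have "grad_norm \<psi> x t \<ge> 0"
    unfolding grad_norm_eq_onorm[OF smooth]
    by (rule onorm_pos_le[OF has_derivative_bounded_linear[OF smooth_fun_has_derivative_slice[OF smooth]]])
  then show ?thesis
    using grad_norm_le_grad_sup[OF smooth assms(2) x(1,2)] x(3) by linarith
qed

text \<open>The supremum is taken over the open set only; the bound extends to its closure by continuity
  of the derivative.\<close>
lemma partial_derivative_le_grad_sup:
  assumes smooth: "smooth_fun (\<lambda>(x, t). \<psi> x t)" and "bounded \<Omega>" "T > 0"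
    and p: "p \<in> closure \<Omega> \<times> {0..T}"
  shows "\<bar>frechet_derivative (\<lambda>(x, t). \<psi> x t) (at p) (w, 0)\<bar> \<le> grad_sup \<Omega> T \<psi> * norm w"
proof -
  let ?Q = "{p. \<bar>frechet_derivative (\<lambda>(x, t). \<psi> x t) (at p) (w, 0)\<bar> \<le> grad_sup \<Omega> T \<psi> * norm w}"
  have "closed ?Q"
    using continuous_on_smooth_fun_derivative[OF smooth, of "(w, 0)"]
    by (intro closed_Collect_le continuous_intros) auto
  moreover have "\<Omega> \<times> {0<..<T} \<subseteq> ?Q"
  proof clarify
    fix x t assume xt: "x \<in> \<Omega>" "t \<in> {0<..<T}"
    have "\<bar>frechet_derivative (\<lambda>(x, t). \<psi> x t) (at (x, t)) (w, 0)\<bar> \<le> grad_norm \<psi> x t * norm w"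
      unfolding grad_norm_eq_onorm[OF smooth]
      using onorm[OF has_derivative_bounded_linear[OF smooth_fun_has_derivative_slice[OF smooth]]]
      by simp
    also have "\<dots> \<le> grad_sup \<Omega> T \<psi> * norm w"
      using grad_norm_le_grad_sup[OF smooth assms(2) xt] by (rule mult_right_mono) simp
    finally show "\<bar>frechet_derivative (\<lambda>(x, t). \<psi> x t) (at (x, t)) (w, 0)\<bar> \<le> grad_sup \<Omega> T \<psi> * norm w" .
  qed
  ultimately have "closure (\<Omega> \<times> {0<..<T}) \<subseteq> ?Q"
    by (rule closure_minimal[rotated])
  then show ?thesis
    using p assms(3) by (auto simp: closure_Times)
qed

lemma lipschitz_on_convex_subset:
  assumes smooth: "smooth_fun (\<lambda>(x, t). \<psi> x t)" and "bounded \<Omega>" "T > 0"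
    and K: "convex K" "K \<subseteq> closure \<Omega>" and ab: "a \<in> K" "b \<in> K" and t: "t \<in> {0..T}"
  shows "\<bar>\<psi> a t - \<psi> b t\<bar> \<le> grad_sup \<Omega> T \<psi> * norm (a - b)"
proof -
  have "norm ((\<lambda>y. \<psi> y t) a - (\<lambda>y. \<psi> y t) b) \<le> grad_sup \<Omega> T \<psi> * norm (a - b)"
  proof (rule differentiable_bound[OF K(1) _ _ ab])
    fix y assume "y \<in> K"
    show "((\<lambda>y. \<psi> y t) has_derivative (\<lambda>w. frechet_derivative (\<lambda>(x, t). \<psi> x t) (at (y, t)) (w, 0))) (at y within K)"
      using smooth_fun_has_derivative_slice[OF smooth] by (rule has_derivative_at_withinI)
    show "onorm (\<lambda>w. frechet_derivative (\<lambda>(x, t). \<psi> x t) (at (y, t)) (w, 0)) \<le> grad_sup \<Omega> T \<psi>"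
      using partial_derivative_le_grad_sup[OF smooth assms(2,3)] \<open>y \<in> K\<close> K(2) t
      by (intro onorm_le) auto
  qed
  then show ?thesis
    by simp
qed

lemma test_fn_int_face_jump:
  assumes mesh: "polytopal_mesh \<Omega> Mesh" and \<psi>: "test_fn \<Omega> T \<psi>" "T > 0"
    and KL: "int_face Mesh K L \<sigma>" and t: "t \<in> {0..T}"
  shows "\<bar>\<psi> (center K) t - \<psi> (center L) t\<bar> \<le> 2 * mesh_size Mesh * grad_sup \<Omega> T \<psi>"
proof -
  have smooth: "smooth_fun (\<lambda>(x, t). \<psi> x t)" and bdd: "bounded \<Omega>"
    using \<psi> mesh unfolding test_fn_def polytopal_mesh_def by auto
  obtain p where p: "p \<in> K" "p \<in> L"
    using KL unfolding int_face_def facet_of_def by blast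
  have near: "\<bar>\<psi> (center X) t - \<psi> p t\<bar> \<le> mesh_size Mesh * grad_sup \<Omega> T \<psi>" if "X \<in> Mesh" "p \<in> X" for X
  proof -
    note X = mesh_cell_facts[OF mesh that(1)]
    have "\<bar>\<psi> (center X) t - \<psi> p t\<bar> \<le> grad_sup \<Omega> T \<psi> * dist (center X) p"
      using lipschitz_on_convex_subset[OF smooth bdd \<psi>(2) X(2,4) center_mem[OF X(1-3)] that(2) t]
      by (simp add: dist_norm)
    also have "\<dots> \<le> grad_sup \<Omega> T \<psi> * mesh_size Mesh"
      using dist_center_le_mesh_size[OF mesh that] grad_sup_pos[OF \<psi>(1) bdd] by simp
    finally show ?thesis
      by (simp add: mult.commute)
  qed
  have "K \<in> Mesh" "L \<in> Mesh"
    using KL unfolding int_face_def by auto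
  then show ?thesis
    using near[of K] near[of L] p by linarith
qed

definition remainder_flux :: "'a::euclidean_space set set \<Rightarrow> ('a set \<Rightarrow> real) \<Rightarrow> real
      \<Rightarrow> ('a set \<Rightarrow> nat \<Rightarrow> real) \<Rightarrow> ('a set \<Rightarrow> nat \<Rightarrow> real) \<Rightarrow> ('a set \<Rightarrow> nat \<Rightarrow> real)
      \<Rightarrow> ('a set \<Rightarrow> 'a set \<Rightarrow> nat \<Rightarrow> real) \<Rightarrow> nat \<Rightarrow> 'a set \<Rightarrow> 'a set \<Rightarrow> real" where
  "remainder_flux Mesh area \<gamma> e ef rhof u m K \<sigma> =
     dphi \<gamma> e ef K (nbr Mesh K \<sigma>) \<sigma> m * (area \<sigma> * rhof \<sigma> m * u K \<sigma> m)"

lemma vol_mult_dR: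
  assumes "vol K \<noteq> 0"
  shows "vol K * dR Mesh area \<gamma> e ef rhof u K m
       = (\<Sum>\<sigma>\<in>cell_faces K \<inter> int_faces Mesh. remainder_flux Mesh area \<gamma> e ef rhof u m K \<sigma>)"
  using assms by (simp add: dR_def remainder_flux_def)

lemma remainder_flux_conservative:
  assumes mesh: "polytopal_mesh \<Omega> Mesh" and gamma: "\<gamma> > 1" and KL: "int_face Mesh K L \<sigma>"
    and e: "e K m > 0" "e L m > 0" and u: "u L \<sigma> m = - u K \<sigma> m"
  shows "remainder_flux Mesh area \<gamma> e ef rhof u m L \<sigma>
       = - remainder_flux Mesh area \<gamma> e ef rhof u m K \<sigma>"
proof -
  have "entropy_remainder \<gamma> (e L m) (e K m) (ef \<sigma> m) = entropy_remainder \<gamma> (e K m) (e L m) (ef \<sigma> m)"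
    using e(2,1) gamma by (rule entropy_remainder_commute)
  then show ?thesis
    using nbr_int_face[OF mesh KL] nbr_int_face[OF mesh int_face_commute[OF KL]] u
    by (simp add: remainder_flux_def dphi_eq_entropy_remainder)
qed

lemma remainder_flux_bound:
  assumes mesh: "polytopal_mesh \<Omega> Mesh" and gamma: "\<gamma> > 1" and KL: "int_face Mesh K L \<sigma>"
    and eK: "e K m > 0" "1 / e K m \<le> M" and eL: "e L m > 0" "1 / e L m \<le> M"
    and area: "area \<sigma> \<ge> 0" and rhof: "\<bar>rhof \<sigma> m\<bar> \<le> M"
    and u: "\<bar>u K \<sigma> m\<bar> \<le> M" "u L \<sigma> m = - u K \<sigma> m"
    and upwind: "\<And>K L. int_face Mesh K L \<sigma> \<Longrightarrow> u K \<sigma> m > 0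
                   \<Longrightarrow> ef \<sigma> m \<in> between (e K m) (xKL (phi_e \<gamma>) (e K m) (e L m))"
  shows "\<bar>remainder_flux Mesh area \<gamma> e ef rhof u m K \<sigma>\<bar>
       \<le> M\<^sup>2 * (M / (\<gamma> - 1)) * area \<sigma> * \<bar>e L m - e K m\<bar>"
proof -
  have M: "M \<ge> 0"
    using eK by (smt (verit) divide_pos_pos)
  have "\<bar>entropy_remainder \<gamma> (e K m) (e L m) (ef \<sigma> m) * u K \<sigma> m\<bar>
      \<le> M / (\<gamma> - 1) * \<bar>e L m - e K m\<bar> * \<bar>u K \<sigma> m\<bar>"
    using upwind[OF KL] upwind[OF int_face_commute[OF KL]] u(2)
    by (intro entropy_remainder_upwind_bound[OF gamma eK eL]) auto
  also have "\<dots> \<le> M / (\<gamma> - 1) * \<bar>e L m - e K m\<bar> * M"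
    using u(1) gamma M by (intro mult_left_mono) auto
  finally have "area \<sigma> * \<bar>rhof \<sigma> m\<bar> * \<bar>entropy_remainder \<gamma> (e K m) (e L m) (ef \<sigma> m) * u K \<sigma> m\<bar>
      \<le> area \<sigma> * M * (M / (\<gamma> - 1) * \<bar>e L m - e K m\<bar> * M)"
    using rhof area M by (intro mult_mono mult_left_mono) auto
  then show ?thesis
    using area nbr_int_face[OF mesh KL]
    by (simp add: remainder_flux_def dphi_eq_entropy_remainder abs_mult power2_eq_square mult_ac)
qed

definition face_jumps :: "'a::euclidean_space set set \<Rightarrow> ('a set \<Rightarrow> real) \<Rightarrow> ('a set \<Rightarrow> nat \<Rightarrow> real)
      \<Rightarrow> nat \<Rightarrow> real" where
  "face_jumps Mesh area z n =
     (\<Sum>\<sigma>\<in>int_faces Mesh. area \<sigma> * \<bar>z (nbr Mesh (cell1 Mesh \<sigma>) \<sigma>) n - z (cell1 Mesh \<sigma>) n\<bar>)"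

lemma mesh_size_mult_face_jumps_nonneg:
  assumes mesh: "polytopal_mesh \<Omega> Mesh" and area_pos: "\<And>\<sigma>. \<sigma> \<in> int_faces Mesh \<Longrightarrow> area \<sigma> > 0"
  shows "0 \<le> mesh_size Mesh * face_jumps Mesh area z n"
proof (cases "int_faces Mesh = {}")
  case False
  then obtain \<sigma> where "\<sigma> \<in> int_faces Mesh"
    by blast
  then have "0 \<le> mesh_size Mesh"
    using int_face_cell1[OF mesh] mesh_size_nonneg[OF mesh] by (auto simp: int_face_def)
  moreover have "0 \<le> face_jumps Mesh area z n"
    unfolding face_jumps_def using area_pos by (intro sum_nonneg) (simp add: less_imp_le)
  ultimately show ?thesis
    by simp
qed (simp add: face_jumps_def)

lemma sum_face_jumps_le_norm_xBV:
  assumes "polytopal_mesh \<Omega> Mesh" "\<And>\<sigma>. \<sigma> \<in> int_faces Mesh \<Longrightarrow> area \<sigma> > 0" "dt \<ge> 0"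
  shows "(\<Sum>n\<in>{1..N}. dt * (mesh_size Mesh * face_jumps Mesh area z n))
       \<le> norm_xBV Mesh area dt N z * mesh_size Mesh"
proof -
  have "(\<Sum>n\<in>{1..N}. dt * (mesh_size Mesh * face_jumps Mesh area z n))
      \<le> (\<Sum>n\<in>{0..N}. dt * (mesh_size Mesh * face_jumps Mesh area z n))"
    using mesh_size_mult_face_jumps_nonneg[OF assms(1,2)] assms(3) by (intro sum_mono2) auto
  also have "\<dots> = norm_xBV Mesh area dt N z * mesh_size Mesh"
    unfolding norm_xBV_def face_jumps_def sum_distrib_right by (simp add: mult_ac)
  finally show ?thesis .
qed

lemma sum_dR_test_le:
  fixes \<psi> :: "'a::euclidean_space \<Rightarrow> real \<Rightarrow> real"
  assumes mesh: "polytopal_mesh \<Omega> Mesh" and gamma: "\<gamma> > 1"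
    and area_pos: "\<And>\<sigma>. \<sigma> \<in> int_faces Mesh \<Longrightarrow> area \<sigma> > 0"
    and e_pos: "\<And>K. K \<in> Mesh \<Longrightarrow> e K m > 0" and e_inv_bd: "\<And>K. K \<in> Mesh \<Longrightarrow> 1 / e K m \<le> M"
    and u_antisym: "\<And>K L \<sigma>. int_face Mesh K L \<sigma> \<Longrightarrow> u L \<sigma> m = - u K \<sigma> m"
    and u_bd: "\<And>K L \<sigma>. int_face Mesh K L \<sigma> \<Longrightarrow> \<bar>u K \<sigma> m\<bar> \<le> M"
    and rhof_bd: "\<And>\<sigma>. \<sigma> \<in> int_faces Mesh \<Longrightarrow> \<bar>rhof \<sigma> m\<bar> \<le> M"
    and upwind: "\<And>K L \<sigma>. int_face Mesh K L \<sigma> \<Longrightarrow> u K \<sigma> m > 0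
                   \<Longrightarrow> ef \<sigma> m \<in> between (e K m) (xKL (phi_e \<gamma>) (e K m) (e L m))"
    and \<psi>: "test_fn \<Omega> T \<psi>" "T > 0" and t: "t \<in> {0..T}"
  shows "(\<Sum>K\<in>Mesh. vol K * dR Mesh area \<gamma> e ef rhof u K m * \<psi> (center K) t)
       \<le> 2 * M\<^sup>2 * (M / (\<gamma> - 1)) * grad_sup \<Omega> T \<psi> * (mesh_size Mesh * face_jumps Mesh area e m)"
proof -
  let ?F = "remainder_flux Mesh area \<gamma> e ef rhof u m"
  have cells: "K \<in> Mesh" "L \<in> Mesh" "\<sigma> \<in> int_faces Mesh" if "int_face Mesh K L \<sigma>" for K L \<sigma>
    using that by (auto simp: int_face_def int_faces_def)
  have "(\<Sum>K\<in>Mesh. vol K * dR Mesh area \<gamma> e ef rhof u K m * \<psi> (center K) t)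
      = (\<Sum>K\<in>Mesh. \<Sum>\<sigma>\<in>cell_faces K \<inter> int_faces Mesh. ?F K \<sigma> * \<psi> (center K) t)"
    using vol_pos[OF mesh_cell_facts(1-3)[OF mesh]]
    by (intro sum.cong refl) (simp add: vol_mult_dR sum_distrib_right less_imp_neq[symmetric])
  also have "\<dots> \<le> 2 * mesh_size Mesh * grad_sup \<Omega> T \<psi> * (\<Sum>\<sigma>\<in>int_faces Mesh.
      M\<^sup>2 * (M / (\<gamma> - 1)) * area \<sigma> * \<bar>e (nbr Mesh (cell1 Mesh \<sigma>) \<sigma>) m - e (cell1 Mesh \<sigma>) m\<bar>)"
  proof (rule sum_conservative_flux_le[OF mesh])
    fix K L \<sigma> assume KL: "int_face Mesh K L \<sigma>"
    note c = cells[OF KL]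
    show "?F L \<sigma> = - ?F K \<sigma>"
      using c by (intro remainder_flux_conservative[OF mesh gamma KL] e_pos u_antisym[OF KL])
    show "\<bar>?F K \<sigma>\<bar> \<le> M\<^sup>2 * (M / (\<gamma> - 1)) * area \<sigma> * \<bar>e L m - e K m\<bar>"
      using c area_pos[OF c(3)]
      by (intro remainder_flux_bound[OF mesh gamma KL] e_pos e_inv_bd rhof_bd u_bd[OF KL]
          u_antisym[OF KL] upwind) auto
    show "\<bar>\<psi> (center K) t - \<psi> (center L) t\<bar> \<le> 2 * mesh_size Mesh * grad_sup \<Omega> T \<psi>"
      by (rule test_fn_int_face_jump[OF mesh \<psi> KL t])
  qed
  also have "\<dots> = 2 * M\<^sup>2 * (M / (\<gamma> - 1)) * grad_sup \<Omega> T \<psi> * (mesh_size Mesh * face_jumps Mesh area e m)"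
    by (simp add: face_jumps_def sum_distrib_left mult_ac)
  finally show ?thesis .
qed

lemma norm_m11_le:
  assumes "bounded \<Omega>" "dt \<ge> 0"
    and step: "\<And>\<psi> n. test_fn \<Omega> (real N * dt) \<psi> \<Longrightarrow> n \<in> I \<Longrightarrow>
      (\<Sum>K\<in>Mesh. vol K * z K n * \<psi> (center K) (real n * dt))
        \<le> C * grad_sup \<Omega> (real N * dt) \<psi> * b n"
  shows "norm_m11 \<Omega> Mesh dt N I z \<le> ereal (C * (\<Sum>n\<in>I. dt * b n))"
  unfolding norm_m11_def
proof (rule SUP_least)
  fix \<psi> assume "\<psi> \<in> {\<psi>. test_fn \<Omega> (real N * dt) \<psi>}"
  then have \<psi>: "test_fn \<Omega> (real N * dt) \<psi>"
    by simp
  have G: "grad_sup \<Omega> (real N * dt) \<psi> > 0"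
    using grad_sup_pos[OF \<psi> assms(1)] .
  have "(\<Sum>n\<in>I. dt * (\<Sum>K\<in>Mesh. vol K * z K n * \<psi> (center K) (real n * dt)))
      \<le> (\<Sum>n\<in>I. dt * (C * grad_sup \<Omega> (real N * dt) \<psi> * b n))"
    using step[OF \<psi>] assms(2) by (intro sum_mono mult_left_mono) auto
  also have "\<dots> = C * (\<Sum>n\<in>I. dt * b n) * grad_sup \<Omega> (real N * dt) \<psi>"
    by (simp add: sum_distrib_left sum_distrib_right mult_ac)
  finally show "ereal ((\<Sum>n\<in>I. dt * (\<Sum>K\<in>Mesh. vol K * z K n * \<psi> (center K) (real n * dt)))
      / grad_sup \<Omega> (real N * dt) \<psi>) \<le> ereal (C * (\<Sum>n\<in>I. dt * b n))"
    using G by (simp add: divide_le_eq)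
qed

theorem lemma2p8:
  fixes \<Omega> :: "'a::euclidean_space set" and Mesh :: "'a set set"
    and area :: "'a set \<Rightarrow> real"
    and \<gamma> M dt :: real and N :: nat
    and rho e :: "'a set \<Rightarrow> nat \<Rightarrow> real"
    and rhof ef :: "'a set \<Rightarrow> nat \<Rightarrow> real"
    and u :: "'a set \<Rightarrow> 'a set \<Rightarrow> nat \<Rightarrow> real"
  assumes mesh: "polytopal_mesh \<Omega> Mesh"
    and area_pos: "\<And>\<sigma>. \<sigma> \<in> int_faces Mesh \<Longrightarrow> area \<sigma> > 0"
    and dt: "dt > 0" and N: "N \<ge> 1"
    and gamma: "\<gamma> > 1" and M: "M > 1"
    and u_antisym: "\<And>K L \<sigma> n. int_face Mesh K L \<sigma> \<Longrightarrow> n \<le> N \<Longrightarrow> u L \<sigma> n = - u K \<sigma> n"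
    and u_bdry: "\<And>K \<sigma> n. K \<in> Mesh \<Longrightarrow> \<sigma> \<in> cell_faces K \<Longrightarrow> \<sigma> \<notin> int_faces Mesh
                   \<Longrightarrow> n \<le> N \<Longrightarrow> u K \<sigma> n = 0"
    and rho_pos: "\<And>K n. K \<in> Mesh \<Longrightarrow> n \<le> N \<Longrightarrow> rho K n > 0"
    and e_pos: "\<And>K n. K \<in> Mesh \<Longrightarrow> n \<le> N \<Longrightarrow> e K n > 0"
    and e_face: "\<And>K L \<sigma> n. int_face Mesh K L \<sigma> \<Longrightarrow> n < N \<Longrightarrow> u K \<sigma> (n+1) > 0 \<Longrightarrow>
                   ef \<sigma> (n+1) \<in> between (e K (n+1)) (xKL (phi_e \<gamma>) (e K (n+1)) (e L (n+1)))"
    and rho_bd: "\<And>K n. K \<in> Mesh \<Longrightarrow> n \<le> N \<Longrightarrow> rho K n \<le> M"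
    and e_bd: "\<And>K n. K \<in> Mesh \<Longrightarrow> n \<le> N \<Longrightarrow> e K n \<le> M"
    and e_inv_bd: "\<And>K n. K \<in> Mesh \<Longrightarrow> n \<le> N \<Longrightarrow> 1 / e K n \<le> M"
    and u_bd: "\<And>K \<sigma> n. K \<in> Mesh \<Longrightarrow> \<sigma> \<in> cell_faces K \<Longrightarrow> n \<le> N \<Longrightarrow> \<bar>u K \<sigma> n\<bar> \<le> M"
    and rhof_bd: "\<And>\<sigma> n. \<sigma> \<in> int_faces Mesh \<Longrightarrow> n < N \<Longrightarrow> \<bar>rhof \<sigma> (n+1)\<bar> \<le> M"
  shows "norm_m11 \<Omega> Mesh dt N {1..N} (dR Mesh area \<gamma> e ef rhof u)
           \<le> ereal (3 * M^2 * max \<bar>deriv (phi_e \<gamma>) (1/M)\<bar> \<bar>deriv (phi_e \<gamma>) M\<bar>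
                     * norm_xBV Mesh area dt N e * mesh_size Mesh)"
proof -
  define c where "c = M / (\<gamma> - 1)"
  let ?HJ = "\<lambda>n. mesh_size Mesh * face_jumps Mesh area e n"
  have "norm_m11 \<Omega> Mesh dt N {1..N} (dR Mesh area \<gamma> e ef rhof u)
      \<le> ereal (2 * M\<^sup>2 * c * (\<Sum>n\<in>{1..N}. dt * ?HJ n))"
  proof (rule norm_m11_le)
    fix \<psi> n assume \<psi>: "test_fn \<Omega> (real N * dt) \<psi>" and n: "n \<in> {1..N}"
    then obtain m where m: "n = m + 1" "m < N"
      by (intro that[of "n - 1"]) auto
    have t: "real (m + 1) * dt \<in> {0..real N * dt}"
      using m dt by (auto intro: mult_right_mono)
    show "(\<Sum>K\<in>Mesh. vol K * dR Mesh area \<gamma> e ef rhof u K n * \<psi> (center K) (real n * dt))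
        \<le> 2 * M\<^sup>2 * c * grad_sup \<Omega> (real N * dt) \<psi> * ?HJ n"
      unfolding c_def m(1)
      by (rule sum_dR_test_le[where m = "m + 1" and e = e and u = u and rhof = rhof and ef = ef,
            OF mesh gamma area_pos _ _ _ _ rhof_bd[OF _ m(2)] e_face[OF _ m(2)] \<psi> _ t])
        (use m(2) dt N in \<open>auto intro: e_pos e_inv_bd u_antisym u_bd simp: int_face_def cell_faces_def\<close>)
  qed (use mesh dt in \<open>simp_all add: polytopal_mesh_def\<close>)
  also have "\<dots> \<le> ereal (3 * M\<^sup>2 * c * norm_xBV Mesh area dt N e * mesh_size Mesh)"
  proof -
    have "0 \<le> (\<Sum>n\<in>{1..N}. dt * ?HJ n)"
      using mesh_size_mult_face_jumps_nonneg[OF mesh area_pos] dt by (intro sum_nonneg) simp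
    then have "2 * (\<Sum>n\<in>{1..N}. dt * ?HJ n) \<le> 3 * (norm_xBV Mesh area dt N e * mesh_size Mesh)"
      using sum_face_jumps_le_norm_xBV[where area = area and dt = dt and N = N and z = e, OF mesh area_pos] dt
      by simp
    from mult_left_mono[OF this, of "M\<^sup>2 * c"] show ?thesis
      using gamma M by (simp add: c_def mult_ac)
  qed
  finally show ?thesis
    unfolding max_abs_deriv_phi_e[OF gamma M] c_def .
qed

end
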